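(* Let $G$ be a group with a rotary pair $(a,z)$ and let $\Gamma=\mathrm{Cos}(G,\langle a\rangle,\langle z\rangle)=(V,E,\mathbf I)$, of valency $k$ and edge-multiplicity $\lambda$ (so $|a|=k\lambda$). Then: (a) the kernel of the action of $G$ on $V$ is $G_{(V)}=\langle a\rangle\cap\langle a^z\rangle$; (b) $\langle a\rangle\cap\langle az\rangle$ and $\langle a\rangle\cap\langle zz^a\rangle$ are normal subgroups of $G$; (c) if either $|\langle az\rangle:\langle a\rangle\cap\langle az\rangle|\le2$, or $|\langle z,z^a\rangle:\langle a\rangle\cap\langle z,z^a\rangle|\le 2$, then $G=\langle a\rangle\rtimes\langle z\rangle$ and $\Gamma\cong\mathbf K_2^{(\lambda)}$ with $\lambda=|a|$.
   Context: A rotary pair for $G$ is $(a,z)$ with $G=\langle a,z\rangle$, $|a|$ finite, $|z|=2$, $z\notin\langle a\rangle$. $\mathrm{Cos}(G,H,J)$: vertex set $\{Hx:x\in G\}$, edge set $\{Jy:y\in G\}$, $Hx$ incident with $Jy$ iff $yx^{-1}\in JH$, $G$ acting by right multiplication. $\mathbf K_2^{(\lambda)}$: two vertices joined by $\lambda$ edges. *)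

theory Defs
  imports "HOL-Algebra.Algebra"
begin

text \<open>Rotary pair (a,z) for G: G = <a,z>, |a| finite, |z| = 2, z not in <a>.
  (HOL-Algebra's ord is 0 exactly for elements of infinite order.)\<close>
definition rotary_pair :: "('a, 'b) monoid_scheme \<Rightarrow> 'a \<Rightarrow> 'a \<Rightarrow> bool" where
  "rotary_pair G a z \<longleftrightarrow>
     a \<in> carrier G \<and> z \<in> carrier G \<and>
     generate G {a, z} = carrier G \<and>
     group.ord G a > 0 \<and> group.ord G z = 2 \<and>
     z \<notin> generate G {a}"

type_synonym ('v, 'e) incidence_structure = "'v set \<times> 'e set \<times> ('v \<Rightarrow> 'e \<Rightarrow> bool)"

definition coset_graph :: "('a, 'b) monoid_scheme \<Rightarrow> 'a set \<Rightarrow> 'a set \<Rightarrow> ('a set, 'a set) incidence_structure" where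
  "coset_graph G H J =
     (rcosets\<^bsub>G\<^esub> H, rcosets\<^bsub>G\<^esub> J,
      (\<lambda>v e. \<exists>x\<in>carrier G. \<exists>y\<in>carrier G. v = H #>\<^bsub>G\<^esub> x \<and> e = J #>\<^bsub>G\<^esub> y \<and>
              y \<otimes>\<^bsub>G\<^esub> inv\<^bsub>G\<^esub> x \<in> J <#>\<^bsub>G\<^esub> H))"

definition K2_multi :: "nat \<Rightarrow> (nat, nat) incidence_structure" where
  "K2_multi lam = ({0, 1}, {..<lam}, (\<lambda>v e. True))"

definition incidence_iso :: "('v, 'e) incidence_structure \<Rightarrow> ('w, 'f) incidence_structure \<Rightarrow> bool" where
  "incidence_iso \<Gamma> \<Delta> \<longleftrightarrow>
     (case \<Gamma> of (V1, E1, I1) \<Rightarrow> case \<Delta> of (V2, E2, I2) \<Rightarrow>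
       \<exists>f g. bij_betw f V1 V2 \<and> bij_betw g E1 E2 \<and>
             (\<forall>v\<in>V1. \<forall>e\<in>E1. I1 v e \<longleftrightarrow> I2 (f v) (g e)))"

definition vertex_kernel :: "('a, 'b) monoid_scheme \<Rightarrow> 'a set \<Rightarrow> 'a set" where
  "vertex_kernel G H = {g \<in> carrier G. \<forall>v \<in> rcosets\<^bsub>G\<^esub> H. v #>\<^bsub>G\<^esub> g = v}"

definition conj_el :: "('a, 'b) monoid_scheme \<Rightarrow> 'a \<Rightarrow> 'a \<Rightarrow> 'a" where
  "conj_el G x g = inv\<^bsub>G\<^esub> g \<otimes>\<^bsub>G\<^esub> x \<otimes>\<^bsub>G\<^esub> g"

definition index_le :: "('a, 'b) monoid_scheme \<Rightarrow> 'a set \<Rightarrow> 'a set \<Rightarrow> nat \<Rightarrow> bool" where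
  "index_le G A K n \<longleftrightarrow>
     finite (rcosets\<^bsub>G\<lparr>carrier := A\<rparr>\<^esub> K) \<and> card (rcosets\<^bsub>G\<lparr>carrier := A\<rparr>\<^esub> K) \<le> n"

definition internal_semidirect :: "('a, 'b) monoid_scheme \<Rightarrow> 'a set \<Rightarrow> 'a set \<Rightarrow> bool" where
  "internal_semidirect G N K \<longleftrightarrow>
     N \<lhd> G \<and> subgroup K G \<and> N \<inter> K = {\<one>\<^bsub>G\<^esub>} \<and> N <#>\<^bsub>G\<^esub> K = carrier G"

end

theory Submission
  imports Defs
begin

text \<open>Write \<open>A = \<langle>a\<rangle>\<close>. Since \<open>a\<close> centralises \<open>A\<close> and \<open>G = \<langle>a, z\<rangle>\<close>, a subgroup
  \<open>N \<subseteq> A\<close> is normal as soon as \<open>z N z \<subseteq> N\<close>. This applies to \<open>A \<inter> A\<^sup>z\<close>, which is the core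
  of \<open>A\<close> and hence the kernel of the action on the cosets of \<open>A\<close>; to \<open>A \<inter> \<langle>az\<rangle>\<close>, which
  \<open>z\<close> centralises because it commutes with both \<open>a\<close> and \<open>az\<close>; and to \<open>A \<inter> \<langle>zz\<^sup>a\<rangle>\<close>,
  which \<open>z\<close> inverts. If \<open>N\<close> has index at most 2 in \<open>L\<close>, any two elements of \<open>L - N\<close>
  lie in one coset of \<open>N\<close>; applied to \<open>az, (az)\<^sup>-\<^sup>1\<close> in \<open>\<langle>az\<rangle>\<close>, resp. to \<open>z, z\<^sup>a\<close> in
  \<open>\<langle>z, z\<^sup>a\<rangle>\<close>, either index hypothesis yields \<open>zaz \<in> A\<close>. Then \<open>A\<close> is normal with complement
  \<open>\<langle>z\<rangle> = {1, z}\<close>, so the coset graph has two vertices, \<open>|G|/2 = |a|\<close> edges, and every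
  vertex lies on every edge.\<close>

lemma (in group) inv_cancel_left [simp]:
  "x \<in> carrier G \<Longrightarrow> y \<in> carrier G \<Longrightarrow> x \<otimes> (inv x \<otimes> y) = y"
  "x \<in> carrier G \<Longrightarrow> y \<in> carrier G \<Longrightarrow> inv x \<otimes> (x \<otimes> y) = y"
  by (simp_all add: m_assoc[symmetric])

lemma (in group) conj_int_pow:
  assumes "g \<in> carrier G" "x \<in> carrier G"
  shows "(inv g \<otimes> x \<otimes> g) [^] (k::int) = inv g \<otimes> x [^] k \<otimes> g"
proof -
  have "(\<lambda>x. inv g \<otimes> x \<otimes> g) \<in> hom G G"
    using assms by (intro homI) (simp_all add: m_assoc)
  from hom_int_pow[OF this assms(2) is_group is_group] show ?thesis by simp
qed

lemma (in group) generate_singleton_commute: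
  assumes "x \<in> carrier G" "y \<in> generate G {x}"
  shows "x \<otimes> y = y \<otimes> x"
proof -
  obtain k :: int where "y = x [^] k" using assms generate_pow by auto
  have "x \<otimes> x [^] k = x [^] (1 + k)" using assms(1) by (simp add: int_pow_mult)
  also have "\<dots> = x [^] (k + 1)" by (simp add: add.commute)
  also have "\<dots> = x [^] k \<otimes> x" using assms(1) by (simp add: int_pow_mult)
  finally show ?thesis using \<open>y = x [^] k\<close> by simp
qed

lemma (in group) conj_eq_if_commute:
  assumes "x \<in> carrier G" "h \<in> carrier G" "x \<otimes> h = h \<otimes> x"
  shows "x \<otimes> h \<otimes> inv x = h" "inv x \<otimes> h \<otimes> x = h"
proof -
  show "x \<otimes> h \<otimes> inv x = h" using assms by (simp add: m_assoc)
  have "inv x \<otimes> h \<otimes> x = inv x \<otimes> (x \<otimes> h)" using assms by (simp add: m_assoc)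
  also have "\<dots> = h" using assms(1,2) by (simp add: m_assoc[symmetric])
  finally show "inv x \<otimes> h \<otimes> x = h" .
qed

lemma (in group) rcos_eq_iff:
  assumes "subgroup H G" "x \<in> carrier G" "y \<in> carrier G"
  shows "H #> x = H #> y \<longleftrightarrow> x \<otimes> inv y \<in> H"
proof
  assume "H #> x = H #> y"
  then have "x \<in> H #> y" using rcos_self[OF assms(2,1)] by simp
  then show "x \<otimes> inv y \<in> H" using subgroup.rcos_module_imp[OF assms(1) is_group assms(3)] by blast
next
  assume "x \<otimes> inv y \<in> H"
  then have "x \<in> H #> y" using subgroup.rcos_module_rev[OF assms(1) is_group assms(3,2)] by blast
  then show "H #> x = H #> y" using repr_independence[OF _ assms(3,1)] by simp
qed

lemma (in group) mem_vertex_kernel_iff: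
  assumes "subgroup H G"
  shows "g \<in> vertex_kernel G H \<longleftrightarrow> g \<in> carrier G \<and> (\<forall>x\<in>carrier G. x \<otimes> g \<otimes> inv x \<in> H)"
proof -
  have "H #> x #> g = H #> x \<longleftrightarrow> x \<otimes> g \<otimes> inv x \<in> H" if "x \<in> carrier G" "g \<in> carrier G" for x
    using that coset_mult_assoc[OF subgroup.subset[OF assms]] rcos_eq_iff[OF assms] by simp
  then show ?thesis unfolding vertex_kernel_def RCOSETS_def by auto
qed

lemma (in group) normal_if_generators_normalize:
  assumes N: "subgroup N G" and gen: "generate G S = carrier G" and S: "S \<subseteq> carrier G"
    and normalize: "\<And>s h. s \<in> S \<Longrightarrow> h \<in> N \<Longrightarrow> s \<otimes> h \<otimes> inv s \<in> N \<and> inv s \<otimes> h \<otimes> s \<in> N"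
  shows "N \<lhd> G"
proof -
  define T where "T = {x \<in> carrier G. \<forall>h\<in>N. x \<otimes> h \<otimes> inv x \<in> N \<and> inv x \<otimes> h \<otimes> x \<in> N}"
  have NG: "N \<subseteq> carrier G" using subgroup.subset[OF N] .
  have "subgroup T G"
  proof (rule subgroupI)
    show "T \<subseteq> carrier G" "T \<noteq> {}"
      using NG unfolding T_def by (auto intro!: exI[of _ \<one>])
  next
    fix x assume "x \<in> T"
    then show "inv x \<in> T" unfolding T_def by auto
  next
    fix x y assume x: "x \<in> T" and y: "y \<in> T"
    then have xy: "x \<in> carrier G" "y \<in> carrier G" unfolding T_def by auto
    have "x \<otimes> y \<otimes> h \<otimes> inv (x \<otimes> y) = x \<otimes> (y \<otimes> h \<otimes> inv y) \<otimes> inv x"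
      and "inv (x \<otimes> y) \<otimes> h \<otimes> (x \<otimes> y) = inv y \<otimes> (inv x \<otimes> h \<otimes> x) \<otimes> y"
      if "h \<in> N" for h
      using xy that NG by (auto simp: inv_mult_group m_assoc)
    then show "x \<otimes> y \<in> T" using x y xy unfolding T_def by auto
  qed
  then have "carrier G \<subseteq> T"
    using generate_subgroup_incl[of S T] S normalize gen unfolding T_def by auto
  then show ?thesis using N normal_inv_iff unfolding T_def by blast
qed

lemma (in group) index_le_two_rcos_eq:
  assumes index: "index_le G A N 2" and A: "subgroup A G" and N: "subgroup N G"
    and "x \<in> A" "y \<in> A" "x \<notin> N" "y \<notin> N"
  shows "x \<otimes> inv y \<in> N"
proof -
  let ?cosets = "(\<lambda>g. N #> g) ` A"
  have "rcosets\<^bsub>G\<lparr>carrier := A\<rparr>\<^esub> N = ?cosets" by (auto simp: RCOSETS_def r_coset_def)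
  then have fin: "finite ?cosets" and card: "card ?cosets \<le> 2"
    using index unfolding index_le_def by auto
  have xy: "x \<in> carrier G" "y \<in> carrier G" using assms subgroup.subset by auto
  have distinct: "N #> \<one> \<noteq> N #> x" "N #> \<one> \<noteq> N #> y"
    using rcos_eq_iff[OF N] assms xy subgroup.m_inv_closed[OF N] by fastforce+
  have "N #> x = N #> y"
  proof (rule ccontr)
    assume "N #> x \<noteq> N #> y"
    then have "card {N #> \<one>, N #> x, N #> y} = 3" using distinct by auto
    moreover have "card {N #> \<one>, N #> x, N #> y} \<le> card ?cosets"
      by (rule card_mono[OF fin]) (use assms subgroup.one_closed[OF A] in auto)
    ultimately show False using card by simp
  qed
  with rcos_eq_iff[OF N xy] show ?thesis by blast
qed

lemma incidence_iso_K2_multiI: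
  assumes "card V = 2" "finite E" "card E = n" "\<forall>v\<in>V. \<forall>e\<in>E. I v e"
  shows "incidence_iso (V, E, I) (K2_multi n)"
proof -
  have "finite V" using assms(1) card.infinite by fastforce
  then obtain f where "bij_betw f V {0, 1::nat}"
    using assms(1) finite_same_card_bij[of V "{0, 1::nat}"] by auto
  moreover obtain g where "bij_betw g E {..<n}"
    using assms(2,3) finite_same_card_bij[of E "{..<n}"] by auto
  ultimately show ?thesis using assms(4) unfolding incidence_iso_def K2_multi_def by auto
qed

lemma (in group) bij_betw_complement_rcosets:
  assumes "internal_semidirect G H K"
  shows "bij_betw (\<lambda>k. H #> k) K (rcosets H)"
proof -
  have H: "subgroup H G" and K: "subgroup K G" and HK: "H \<inter> K = {\<one>}" "H <#> K = carrier G"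
    using assms normal_imp_subgroup unfolding internal_semidirect_def by auto
  have KG: "K \<subseteq> carrier G" and HG: "H \<subseteq> carrier G" using H K subgroup.subset by auto
  have "inj_on (\<lambda>k. H #> k) K"
  proof (rule inj_onI)
    fix k k' assume kk': "k \<in> K" "k' \<in> K" "H #> k = H #> k'"
    then have "k \<otimes> inv k' \<in> H \<inter> K"
      using rcos_eq_iff[OF H] KG subgroup.m_closed[OF K] subgroup.m_inv_closed[OF K] by auto
    then have "k \<otimes> inv k' = \<one>" using HK by blast
    then have "inv (inv k') = k" using inv_equality kk' KG by (meson inv_closed subsetD)
    then show "k = k'" using kk' KG by auto
  qed
  moreover have "(\<lambda>g. H #> g) ` (H <#> K) = (\<lambda>k. H #> k) ` K"
  proof
    have "H #> (h \<otimes> k) = H #> k" if "h \<in> H" "k \<in> K" for h k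
    proof -
      have "H #> (h \<otimes> k) = (H #> h) #> k"
        using that HG KG coset_mult_assoc[OF HG] by (simp add: subsetD)
      then show ?thesis using that HG coset_join2[OF _ H] by (simp add: subsetD)
    qed
    then show "(\<lambda>g. H #> g) ` (H <#> K) \<subseteq> (\<lambda>k. H #> k) ` K"
      unfolding set_mult_def by auto
    have "k \<in> H <#> K" if "k \<in> K" for k
      using that KG subgroup.one_closed[OF H] unfolding set_mult_def by force
    then show "(\<lambda>k. H #> k) ` K \<subseteq> (\<lambda>g. H #> g) ` (H <#> K)" by blast
  qed
  then have "rcosets H = (\<lambda>k. H #> k) ` K"
    using HK(2) KG unfolding RCOSETS_def by auto
  ultimately show ?thesis unfolding bij_betw_def by simp
qed

lemma (in group) set_mult_carrier_swap:
  assumes H: "subgroup H G" and K: "subgroup K G" and HK: "H <#> K = carrier G"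
  shows "K <#> H = carrier G"
proof
  show "K <#> H \<subseteq> carrier G" using H K by (simp add: setmult_subset_G subgroup.subset)
  show "carrier G \<subseteq> K <#> H"
  proof
    fix c assume c: "c \<in> carrier G"
    obtain h k where hk: "h \<in> H" "k \<in> K" "inv c = h \<otimes> k"
      using HK c unfolding set_mult_def by (metis (no_types, lifting) UN_E inv_closed singletonD)
    then have "c = inv k \<otimes> inv h"
      using c subgroup.mem_carrier[OF H] subgroup.mem_carrier[OF K] by (metis inv_inv inv_mult_group)
    then show "c \<in> K <#> H"
      using hk subgroup.m_inv_closed[OF H] subgroup.m_inv_closed[OF K] unfolding set_mult_def by blast
  qed
qed

lemma (in group) coset_graph_complement_K2_multi:
  assumes sd: "internal_semidirect G H K" and "card K = 2" "finite H"
  shows "incidence_iso (coset_graph G H K) (K2_multi (card H))"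
proof -
  have H: "subgroup H G" and K: "subgroup K G" and HK: "H <#> K = carrier G"
    using sd normal_imp_subgroup unfolding internal_semidirect_def by auto
  have card_vertices: "card (rcosets H) = 2"
    using bij_betw_same_card[OF bij_betw_complement_rcosets[OF sd]] assms(2) by simp
  then have "card (rcosets K) * 2 = 2 * card H"
    using lagrange[OF H] lagrange[OF K] assms(2) by simp
  moreover have "card H > 0" using assms(3) subgroup.one_closed[OF H] card_gt_0_iff by blast
  ultimately have card_edges: "card (rcosets K) = card H" and finite_edges: "finite (rcosets K)"
    using card_gt_0_iff by fastforce+
  have incident: "\<forall>v\<in>rcosets H. \<forall>e\<in>rcosets K. \<exists>x\<in>carrier G. \<exists>y\<in>carrier G.
      v = H #> x \<and> e = K #> y \<and> y \<otimes> inv x \<in> K <#> H"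
    using set_mult_carrier_swap[OF H K HK] unfolding RCOSETS_def by auto
  show ?thesis
    unfolding coset_graph_def
    by (rule incidence_iso_K2_multiI[OF card_vertices finite_edges card_edges incident])
qed

locale rotary_group = group +
  fixes a z
  assumes rotary_pair: "rotary_pair G a z"
begin

abbreviation cyclic :: "'a \<Rightarrow> 'a set" (\<open>\<langle>_\<rangle>\<close>)
  where "\<langle>x\<rangle> \<equiv> generate G {x}"

lemma a_closed [simp]: "a \<in> carrier G"
  and z_closed [simp]: "z \<in> carrier G"
  and generate_a_z: "generate G {a, z} = carrier G"
  and ord_a_pos: "ord a > 0"
  and ord_z: "ord z = 2"
  and z_notin_cyclic_a: "z \<notin> \<langle>a\<rangle>"
  using rotary_pair unfolding rotary_pair_def by auto

lemma z_mult_z [simp]: "z \<otimes> z = \<one>"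
proof -
  have "z [^] (2::nat) = \<one>" using pow_ord_eq_1[OF z_closed] ord_z by simp
  then show ?thesis by (simp add: numeral_2_eq_2)
qed

lemma inv_z [simp]: "inv z = z"
  using inv_equality[OF z_mult_z z_closed z_closed] .

lemma z_mult_z_cancel [simp]: "x \<in> carrier G \<Longrightarrow> z \<otimes> (z \<otimes> x) = x"
  by (simp add: m_assoc[symmetric])

lemma z_conj_involutive [simp]: "x \<in> carrier G \<Longrightarrow> z \<otimes> (z \<otimes> x \<otimes> z) \<otimes> z = x"
  by (simp add: m_assoc)

lemma z_conj_eq_iff: "x \<in> carrier G \<Longrightarrow> y \<in> carrier G \<Longrightarrow> x = z \<otimes> y \<otimes> z \<longleftrightarrow> z \<otimes> x \<otimes> z = y"
  by auto

lemma subgroup_cyclic [simp]: "x \<in> carrier G \<Longrightarrow> subgroup \<langle>x\<rangle> G"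
  by (simp add: generate_is_subgroup)

sublocale cyclic_a: subgroup "\<langle>a\<rangle>" G
  by simp

lemma a_in_cyclic_a [simp]: "a \<in> \<langle>a\<rangle>"
  by (rule generate.incl) simp

lemma finite_cyclic_a: "finite \<langle>a\<rangle>" and card_cyclic_a: "card \<langle>a\<rangle> = ord a"
  using generate_pow_card[OF a_closed] ord_a_pos card_gt_0_iff by auto

lemma normal_if_z_conj_closed:
  assumes N: "subgroup N G" "N \<subseteq> \<langle>a\<rangle>" and z_conj: "\<And>h. h \<in> N \<Longrightarrow> z \<otimes> h \<otimes> z \<in> N"
  shows "N \<lhd> G"
proof (rule normal_if_generators_normalize[OF N(1) generate_a_z])
  show "{a, z} \<subseteq> carrier G" by simp
  fix s h assume "s \<in> {a, z}" and h: "h \<in> N"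
  moreover have "h \<in> carrier G" using h subgroup.mem_carrier[OF N(1)] by blast
  moreover have "a \<otimes> h = h \<otimes> a" using h N(2) by (intro generate_singleton_commute) auto
  ultimately show "s \<otimes> h \<otimes> inv s \<in> N \<and> inv s \<otimes> h \<otimes> s \<in> N"
    using conj_eq_if_commute[of a h] z_conj by auto
qed

lemma mem_cyclic_conj_a_z_iff: "y \<in> \<langle>conj_el G a z\<rangle> \<longleftrightarrow> y \<in> carrier G \<and> z \<otimes> y \<otimes> z \<in> \<langle>a\<rangle>"
proof -
  have "y \<in> \<langle>conj_el G a z\<rangle> \<longleftrightarrow> (\<exists>k::int. y = z \<otimes> a [^] k \<otimes> z)"
    using generate_pow[of "z \<otimes> a \<otimes> z"] conj_int_pow[of z a] by (auto simp: conj_el_def)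
  also have "\<dots> \<longleftrightarrow> y \<in> carrier G \<and> (\<exists>k::int. z \<otimes> y \<otimes> z = a [^] k)"
    by (auto simp: z_conj_eq_iff)
  finally show ?thesis using generate_pow[OF a_closed] by auto
qed

lemma normal_cyclic_inter_conj_a_z: "\<langle>a\<rangle> \<inter> \<langle>conj_el G a z\<rangle> \<lhd> G"
proof (rule normal_if_z_conj_closed)
  show "subgroup (\<langle>a\<rangle> \<inter> \<langle>conj_el G a z\<rangle>) G"
    by (intro subgroups_Inter_pair subgroup_cyclic) (simp_all add: conj_el_def)
  fix h assume "h \<in> \<langle>a\<rangle> \<inter> \<langle>conj_el G a z\<rangle>"
  then show "z \<otimes> h \<otimes> z \<in> \<langle>a\<rangle> \<inter> \<langle>conj_el G a z\<rangle>"
    using mem_cyclic_conj_a_z_iff[of h] mem_cyclic_conj_a_z_iff[of "z \<otimes> h \<otimes> z"] by auto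
qed blast

lemma vertex_kernel_eq: "vertex_kernel G \<langle>a\<rangle> = \<langle>a\<rangle> \<inter> \<langle>conj_el G a z\<rangle>"
proof
  show "vertex_kernel G \<langle>a\<rangle> \<subseteq> \<langle>a\<rangle> \<inter> \<langle>conj_el G a z\<rangle>"
  proof
    fix g assume "g \<in> vertex_kernel G \<langle>a\<rangle>"
    then have g: "g \<in> carrier G" and conj_g: "\<forall>x\<in>carrier G. x \<otimes> g \<otimes> inv x \<in> \<langle>a\<rangle>"
      using mem_vertex_kernel_iff[of "\<langle>a\<rangle>"] by auto
    have "g \<in> \<langle>a\<rangle>" using conj_g[rule_format, OF one_closed] g by simp
    moreover have "z \<otimes> g \<otimes> z \<in> \<langle>a\<rangle>" using conj_g[rule_format, OF z_closed] by simp
    ultimately show "g \<in> \<langle>a\<rangle> \<inter> \<langle>conj_el G a z\<rangle>" using g mem_cyclic_conj_a_z_iff by simp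
  qed
  show "\<langle>a\<rangle> \<inter> \<langle>conj_el G a z\<rangle> \<subseteq> vertex_kernel G \<langle>a\<rangle>"
    using normal_cyclic_inter_conj_a_z mem_vertex_kernel_iff[of "\<langle>a\<rangle>"] by (auto simp: normal_inv_iff)
qed

lemma normal_cyclic_inter_a_mult_z: "\<langle>a\<rangle> \<inter> \<langle>a \<otimes> z\<rangle> \<lhd> G"
proof (rule normal_if_z_conj_closed)
  show "subgroup (\<langle>a\<rangle> \<inter> \<langle>a \<otimes> z\<rangle>) G" by (simp add: subgroups_Inter_pair)
  fix h assume h: "h \<in> \<langle>a\<rangle> \<inter> \<langle>a \<otimes> z\<rangle>"
  then have hc: "h \<in> carrier G" by simp
  have "a \<otimes> (z \<otimes> h) = (a \<otimes> z) \<otimes> h" using hc by (simp add: m_assoc)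
  also have "\<dots> = h \<otimes> (a \<otimes> z)" using h generate_singleton_commute[of "a \<otimes> z" h] by simp
  also have "\<dots> = (a \<otimes> h) \<otimes> z" using h hc generate_singleton_commute[of a h] by (simp add: m_assoc[symmetric])
  also have "\<dots> = a \<otimes> (h \<otimes> z)" using hc by (simp add: m_assoc)
  finally have "z \<otimes> h = h \<otimes> z" using hc by simp
  then show "z \<otimes> h \<otimes> z \<in> \<langle>a\<rangle> \<inter> \<langle>a \<otimes> z\<rangle>" using h hc by (simp add: m_assoc)
qed blast

lemma z_conj_z_mult_conj_z_a: "z \<otimes> (z \<otimes> conj_el G z a) \<otimes> z = inv (z \<otimes> conj_el G z a)"
  by (rule inv_equality[symmetric]) (simp_all add: conj_el_def m_assoc)

lemma normal_cyclic_inter_z_mult_conj_z_a: "\<langle>a\<rangle> \<inter> \<langle>z \<otimes> conj_el G z a\<rangle> \<lhd> G"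
proof (rule normal_if_z_conj_closed)
  let ?w = "z \<otimes> conj_el G z a"
  have w: "?w \<in> carrier G" by (simp add: conj_el_def)
  show N: "subgroup (\<langle>a\<rangle> \<inter> \<langle>?w\<rangle>) G" using w by (simp add: subgroups_Inter_pair)
  fix h assume h: "h \<in> \<langle>a\<rangle> \<inter> \<langle>?w\<rangle>"
  then obtain k :: int where k: "h = ?w [^] k" using generate_pow[OF w] by auto
  have "z \<otimes> h \<otimes> z = (z \<otimes> ?w \<otimes> z) [^] k" using conj_int_pow[OF z_closed w] k by simp
  also have "\<dots> = inv h" using z_conj_z_mult_conj_z_a k w by (simp add: int_pow_inv)
  finally show "z \<otimes> h \<otimes> z \<in> \<langle>a\<rangle> \<inter> \<langle>?w\<rangle>" using subgroup.m_inv_closed[OF N h] by simp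
qed blast

lemma zaz_in_cyclic_a_if_index_a_mult_z:
  assumes "index_le G \<langle>a \<otimes> z\<rangle> (\<langle>a\<rangle> \<inter> \<langle>a \<otimes> z\<rangle>) 2"
  shows "z \<otimes> a \<otimes> z \<in> \<langle>a\<rangle>"
proof -
  let ?b = "a \<otimes> z" and ?N = "\<langle>a\<rangle> \<inter> \<langle>a \<otimes> z\<rangle>"
  have N: "subgroup ?N G" by (simp add: subgroups_Inter_pair)
  have b: "?b \<in> \<langle>?b\<rangle>" "inv ?b \<in> \<langle>?b\<rangle>"
    using generate.incl[of ?b "{?b}" G] generate.inv[of ?b "{?b}" G] by simp_all
  have "?b \<otimes> ?b \<in> ?N"
  proof (cases "?b \<in> ?N")
    case True
    show ?thesis by (rule subgroup.m_closed[OF N True True])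
  next
    case False
    moreover have "inv ?b \<notin> ?N" using False subgroup.m_inv_closed[OF N] by fastforce
    ultimately have "?b \<otimes> inv (inv ?b) \<in> ?N"
      by (intro index_le_two_rcos_eq[OF assms _ N b]) simp_all
    then show ?thesis by simp
  qed
  then have "inv a \<otimes> (?b \<otimes> ?b) \<in> \<langle>a\<rangle>" by simp
  moreover have "inv a \<otimes> (?b \<otimes> ?b) = z \<otimes> a \<otimes> z" by (simp add: m_assoc)
  ultimately show ?thesis by simp
qed

lemma zaz_in_cyclic_a_if_index_z_conj_z_a:
  assumes "index_le G (generate G {z, conj_el G z a}) (\<langle>a\<rangle> \<inter> generate G {z, conj_el G z a}) 2"
  shows "z \<otimes> a \<otimes> z \<in> \<langle>a\<rangle>"
proof -
  let ?d = "conj_el G z a" and ?D = "generate G {z, conj_el G z a}"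
  have d: "?d = inv a \<otimes> z \<otimes> a" "?d \<in> carrier G" by (simp_all add: conj_el_def)
  have D: "subgroup ?D G" "z \<in> ?D" "?d \<in> ?D"
    using d by (auto intro: generate_is_subgroup generate.incl)
  have "?d \<notin> \<langle>a\<rangle>"
  proof
    assume "?d \<in> \<langle>a\<rangle>"
    then have "a \<otimes> ?d \<otimes> inv a \<in> \<langle>a\<rangle>" by simp
    then show False using z_notin_cyclic_a d(1) by (simp add: m_assoc)
  qed
  then have "?d \<otimes> inv z \<in> \<langle>a\<rangle> \<inter> ?D"
    using index_le_two_rcos_eq[OF assms D(1) _ D(3,2)] z_notin_cyclic_a D(1)
    by (simp add: subgroups_Inter_pair)
  then have "a \<otimes> (?d \<otimes> z) \<in> \<langle>a\<rangle>" by simp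
  moreover have "a \<otimes> (?d \<otimes> z) = z \<otimes> a \<otimes> z" using d(1) by (simp add: m_assoc)
  ultimately show ?thesis by simp
qed

lemma normal_cyclic_a_if_zaz_in:
  assumes "z \<otimes> a \<otimes> z \<in> \<langle>a\<rangle>"
  shows "\<langle>a\<rangle> \<lhd> G"
proof (rule normal_if_z_conj_closed[OF cyclic_a.subgroup_axioms subset_refl])
  fix h assume "h \<in> \<langle>a\<rangle>"
  then obtain k :: int where "h = a [^] k" using generate_pow[OF a_closed] by auto
  then have "z \<otimes> h \<otimes> z = (z \<otimes> a \<otimes> z) [^] k" using conj_int_pow[of z a] by simp
  then show "z \<otimes> h \<otimes> z \<in> \<langle>a\<rangle>"
    using subgroup_int_pow_closed[OF cyclic_a.subgroup_axioms assms] by simp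
qed

lemma card_cyclic_z: "card \<langle>z\<rangle> = 2"
  using generate_pow_card[OF z_closed] ord_z by simp

lemma cyclic_z_eq: "\<langle>z\<rangle> = {\<one>, z}"
proof (rule card_subset_eq[symmetric])
  show "finite \<langle>z\<rangle>" using card_cyclic_z card.infinite by fastforce
  show "{\<one>, z} \<subseteq> \<langle>z\<rangle>" using generate.one generate.incl[of z "{z}" G] by auto
  have "z \<noteq> \<one>" using z_notin_cyclic_a generate.one by auto
  then show "card {\<one>, z} = card \<langle>z\<rangle>" using card_cyclic_z by simp
qed

lemma semidirect_if_normal:
  assumes "\<langle>a\<rangle> \<lhd> G"
  shows "internal_semidirect G \<langle>a\<rangle> \<langle>z\<rangle>"
proof -
  have K: "subgroup \<langle>z\<rangle> G" by simp
  have "subgroup (\<langle>a\<rangle> <#> \<langle>z\<rangle>) G"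
    using second_isomorphism_grp.normal_set_mult_subgroup assms K
    unfolding second_isomorphism_grp_def second_isomorphism_grp_axioms_def by blast
  moreover have "a \<otimes> \<one> \<in> \<langle>a\<rangle> <#> \<langle>z\<rangle>" "\<one> \<otimes> z \<in> \<langle>a\<rangle> <#> \<langle>z\<rangle>"
    unfolding set_mult_def cyclic_z_eq using a_in_cyclic_a cyclic_a.one_closed by blast+
  ultimately have "carrier G \<subseteq> \<langle>a\<rangle> <#> \<langle>z\<rangle>"
    using generate_subgroup_incl[of "{a, z}"] generate_a_z by simp
  moreover have "\<langle>a\<rangle> <#> \<langle>z\<rangle> \<subseteq> carrier G"
    by (simp add: setmult_subset_G generate_incl)
  moreover have "\<langle>a\<rangle> \<inter> \<langle>z\<rangle> = {\<one>}"
    using cyclic_z_eq z_notin_cyclic_a generate.one[of G "{a}"] by auto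
  ultimately show ?thesis unfolding internal_semidirect_def using assms K by blast
qed

lemma coset_graph_K2_multi_if_normal:
  assumes "\<langle>a\<rangle> \<lhd> G"
  shows "incidence_iso (coset_graph G \<langle>a\<rangle> \<langle>z\<rangle>) (K2_multi (ord a))"
  using coset_graph_complement_K2_multi[OF semidirect_if_normal[OF assms] card_cyclic_z finite_cyclic_a]
    card_cyclic_a by simp

end

theorem lemma3p5:
  fixes G (structure) and a z
  assumes "group G" and "rotary_pair G a z"
  shows "(vertex_kernel G (generate G {a}) =
            generate G {a} \<inter> generate G {conj_el G a z}) \<and>
         (generate G {a} \<inter> generate G {a \<otimes> z} \<lhd> G) \<and>
         (generate G {a} \<inter> generate G {z \<otimes> conj_el G z a} \<lhd> G) \<and>
         ((index_le G (generate G {a \<otimes> z}) (generate G {a} \<inter> generate G {a \<otimes> z}) 2 \<or>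
           index_le G (generate G {z, conj_el G z a})
                      (generate G {a} \<inter> generate G {z, conj_el G z a}) 2) \<longrightarrow>
          internal_semidirect G (generate G {a}) (generate G {z}) \<and>
          incidence_iso (coset_graph G (generate G {a}) (generate G {z})) (K2_multi (group.ord G a)))"
proof -
  interpret rotary_group G a z
    using assms by (simp add: rotary_group_def rotary_group_axioms_def)
  have "internal_semidirect G \<langle>a\<rangle> \<langle>z\<rangle> \<and>
      incidence_iso (coset_graph G \<langle>a\<rangle> \<langle>z\<rangle>) (K2_multi (ord a))"
    if "index_le G \<langle>a \<otimes> z\<rangle> (\<langle>a\<rangle> \<inter> \<langle>a \<otimes> z\<rangle>) 2 \<or>
      index_le G (generate G {z, conj_el G z a}) (\<langle>a\<rangle> \<inter> generate G {z, conj_el G z a}) 2"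
  proof -
    have "\<langle>a\<rangle> \<lhd> G"
      using that zaz_in_cyclic_a_if_index_a_mult_z zaz_in_cyclic_a_if_index_z_conj_z_a
        normal_cyclic_a_if_zaz_in by blast
    then show ?thesis using semidirect_if_normal coset_graph_K2_multi_if_normal by blast
  qed
  then show ?thesis
    using vertex_kernel_eq normal_cyclic_inter_a_mult_z normal_cyclic_inter_z_mult_conj_z_a by blast
qed

end
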